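(* For every $\varepsilon>0$ there exists a II-polyhedral real Banach space $X$ such that the closed unit ball $B_X$ contains a slice of diameter smaller than $\varepsilon$.
   Context: All Banach spaces are real. For a Banach space $X$, $B_X$ and $S_X$ denote the closed unit ball and unit sphere, $X^*$ the dual, and $Ext(B_{X^*})$ the set of extreme points of $B_{X^*}$. For a set $A\subseteq X^*$, $A'$ denotes the set of accumulation points of $A$ in the weak$^*$ topology of $X^*$. $X$ is called II-polyhedral if there exists $0<r<1$ such that $(Ext B_{X^*})'\subseteq rB_{X^*}$. A slice of a bounded set $C\subseteq X$ is a set of the form $S(C,f,\alpha)=\{x\in C: f(x)>\sup f(C)-\alpha\}$ with $f\in X^*$ (nonzero) and $\alpha>0$. *)

theory Defs
  imports "HOL-Analysis.Analysis"
begin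

text \<open>A Banach space is modelled as a closed linear subspace X of an ambient
real Banach type 'a. Functionals on X are represented extensionally as
functions 'a => real that vanish outside X.\<close>

definition dual_space :: "'a::real_normed_vector set \<Rightarrow> ('a \<Rightarrow> real) set" where
  "dual_space X = {f. (\<forall>x\<in>X. \<forall>y\<in>X. f (x + y) = f x + f y)
                     \<and> (\<forall>c. \<forall>x\<in>X. f (c *\<^sub>R x) = c * f x)
                     \<and> (\<forall>z. z \<notin> X \<longrightarrow> f z = 0)
                     \<and> (\<exists>C. \<forall>x\<in>X. \<bar>f x\<bar> \<le> C * norm x)}"

definition dual_ball :: "'a::real_normed_vector set \<Rightarrow> real \<Rightarrow> ('a \<Rightarrow> real) set" where
  "dual_ball X r = {f \<in> dual_space X. \<forall>x\<in>X. \<bar>f x\<bar> \<le> r * norm x}"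

definition dual_ext :: "'a::real_normed_vector set \<Rightarrow> ('a \<Rightarrow> real) set" where
  "dual_ext X = {f \<in> dual_ball X 1. \<forall>g\<in>dual_ball X 1. \<forall>h\<in>dual_ball X 1.
                    f = (\<lambda>x. (g x + h x) / 2) \<longrightarrow> g = h}"

text \<open>A': weak* accumulation points in X* of a set A of functionals.
Basic weak* neighbourhoods of g are given by finite F \<subseteq> X and \<delta> > 0.\<close>
definition weak_star_acc :: "'a::real_normed_vector set \<Rightarrow> ('a \<Rightarrow> real) set \<Rightarrow> ('a \<Rightarrow> real) set" where
  "weak_star_acc X A = {g \<in> dual_space X. \<forall>F \<delta>. finite F \<and> F \<subseteq> X \<and> \<delta> > 0 \<longrightarrow>
       (\<exists>h\<in>A. h \<noteq> g \<and> (\<forall>x\<in>F. \<bar>h x - g x\<bar> < \<delta>))}"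

definition II_polyhedral :: "'a::real_normed_vector set \<Rightarrow> bool" where
  "II_polyhedral X \<longleftrightarrow> (\<exists>r. 0 < r \<and> r < 1 \<and> weak_star_acc X (dual_ext X) \<subseteq> dual_ball X r)"

definition unit_ball_of :: "'a::real_normed_vector set \<Rightarrow> 'a set" where
  "unit_ball_of X = X \<inter> cball 0 1"

definition slice :: "'a set \<Rightarrow> ('a \<Rightarrow> real) \<Rightarrow> real \<Rightarrow> 'a set" where
  "slice C f \<alpha> = {x \<in> C. f x > Sup (f ` C) - \<alpha>}"

end

theory Submission
  imports Defs
begin

text \<open>
  For 0 < a < 1 let X be the closed subspace of l-infinity of sequences with
  y(2n+1) + y(2n+2) = 2a y(0) and z(n) = (y(2n+1) - y(2n+2))/2 tending to 0. With t = y(0),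
  X is the sum of the reals and c0 normed by max(|t|, a|t| + sup |z|), and a functional is
  determined by its values on u0 (t = 1, z = 0) and on the unit vectors v n of c0. An extreme
  point of the dual ball charges u0 and a single v m, and its pair of values (t, s) is a vertex of
  the hexagon |s| \<le> 1, |t| + (1 - a)|s| \<le> 1. Extreme points are therefore discrete on finitely
  many coordinates, and only those with |t| = a and support escaping to infinity can accumulate;
  their weak* limits have norm at most a, so X is II-polyhedral. The slice y(0) > 1 - \<eta> of the
  unit ball forces |z(n)| \<le> 1 - a(1 - \<eta>), so for a = 1 - \<eta> its diameter is at most 5\<eta>.
\<close>

lemma dual_space_add: "f \<in> dual_space X \<Longrightarrow> x \<in> X \<Longrightarrow> y \<in> X \<Longrightarrow> f (x + y) = f x + f y"
  unfolding dual_space_def by auto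

lemma dual_space_scale: "f \<in> dual_space X \<Longrightarrow> x \<in> X \<Longrightarrow> f (c *\<^sub>R x) = c * f x"
  unfolding dual_space_def by auto

lemma dual_space_outside: "f \<in> dual_space X \<Longrightarrow> x \<notin> X \<Longrightarrow> f x = 0"
  unfolding dual_space_def by auto

lemma dual_space_bounded:
  assumes "f \<in> dual_space X"
  obtains C where "0 \<le> C" "\<And>x. x \<in> X \<Longrightarrow> \<bar>f x\<bar> \<le> C * norm x"
proof -
  obtain C where C: "\<forall>x\<in>X. \<bar>f x\<bar> \<le> C * norm x"
    using assms unfolding dual_space_def by auto
  have "\<bar>f x\<bar> \<le> max C 0 * norm x" if "x \<in> X" for x
    using C that by (meson max.cobounded1 mult_right_mono norm_ge_zero order_trans)
  then show thesis using that[of "max C 0"] by simp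
qed

lemma dual_space_diff:
  "subspace X \<Longrightarrow> f \<in> dual_space X \<Longrightarrow> x \<in> X \<Longrightarrow> y \<in> X \<Longrightarrow> f (x - y) = f x - f y"
  using dual_space_add[of f X x "-y"] dual_space_scale[of f X y "-1"] subspace_neg[of X y]
  by simp

lemma dual_space_sum:
  assumes "subspace X" "f \<in> dual_space X" "finite A" "\<And>i. i \<in> A \<Longrightarrow> g i \<in> X"
  shows "f (\<Sum>i\<in>A. g i) = (\<Sum>i\<in>A. f (g i))"
  using assms(3,4)
proof (induction A rule: finite_induct)
  case empty
  show ?case using dual_space_scale[OF assms(2) subspace_0[OF assms(1)], of 0] by simp
next
  case (insert i A)
  then show ?case by (simp add: dual_space_add[OF assms(2)] subspace_sum[OF assms(1)])
qed

lemma dual_spaceI: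
  assumes "\<And>x y. x \<in> X \<Longrightarrow> y \<in> X \<Longrightarrow> f (x + y) = f x + f y"
    and "\<And>c x. x \<in> X \<Longrightarrow> f (c *\<^sub>R x) = c * f x"
    and "\<And>x. x \<notin> X \<Longrightarrow> f x = 0"
    and "\<And>x. x \<in> X \<Longrightarrow> \<bar>f x\<bar> \<le> C * norm x"
  shows "f \<in> dual_space X"
  using assms unfolding dual_space_def by blast

lemma dual_space_add_scaled:
  assumes f: "f \<in> dual_space X" and g: "g \<in> dual_space X"
  shows "(\<lambda>x. f x + c * g x) \<in> dual_space X"
proof -
  obtain Cf Cg where Cf: "\<And>x. x \<in> X \<Longrightarrow> \<bar>f x\<bar> \<le> Cf * norm x"
    and Cg: "\<And>x. x \<in> X \<Longrightarrow> \<bar>g x\<bar> \<le> Cg * norm x"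
    using dual_space_bounded[OF f] dual_space_bounded[OF g] by metis
  have "\<bar>f x + c * g x\<bar> \<le> (Cf + \<bar>c\<bar> * Cg) * norm x" if "x \<in> X" for x
    using Cf[OF that] mult_left_mono[OF Cg[OF that], of "\<bar>c\<bar>"] abs_triangle_ineq[of "f x" "c * g x"]
    by (simp add: abs_mult algebra_simps)
  then show ?thesis
    using dual_space_add[OF f] dual_space_add[OF g] dual_space_scale[OF f] dual_space_scale[OF g]
      dual_space_outside[OF f] dual_space_outside[OF g]
    by (intro dual_spaceI[where C="Cf + \<bar>c\<bar> * Cg"]) (auto simp: algebra_simps)
qed

lemma dual_ballI: "f \<in> dual_space X \<Longrightarrow> (\<And>x. x \<in> X \<Longrightarrow> \<bar>f x\<bar> \<le> r * norm x) \<Longrightarrow> f \<in> dual_ball X r"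
  unfolding dual_ball_def by blast

lemma dual_ballD:
  "f \<in> dual_ball X r \<Longrightarrow> f \<in> dual_space X"
  "f \<in> dual_ball X r \<Longrightarrow> x \<in> X \<Longrightarrow> \<bar>f x\<bar> \<le> r * norm x"
  unfolding dual_ball_def by auto

lemma dual_extD:
  "f \<in> dual_ext X \<Longrightarrow> f \<in> dual_ball X 1"
  "f \<in> dual_ext X \<Longrightarrow> g \<in> dual_ball X 1 \<Longrightarrow> h \<in> dual_ball X 1 \<Longrightarrow>
     (\<And>x. f x = (g x + h x) / 2) \<Longrightarrow> g = h"
  unfolding dual_ext_def by (auto simp: fun_eq_iff)

lemma dual_space_eq_zero_if_zero_on_dense:
  assumes "subspace X" "f \<in> dual_space X" "y \<in> X"
    and dense: "\<And>e. 0 < e \<Longrightarrow> \<exists>d\<in>X. f d = 0 \<and> norm (y - d) \<le> e"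
  shows "f y = 0"
proof -
  obtain C where C: "0 \<le> C" "\<And>x. x \<in> X \<Longrightarrow> \<bar>f x\<bar> \<le> C * norm x"
    using dual_space_bounded[OF assms(2)] by blast
  have "\<bar>f y\<bar> \<le> 0 + e" if "0 < e" for e
  proof -
    obtain d where d: "d \<in> X" "f d = 0" "norm (y - d) \<le> e / (C + 1)"
      using dense[of "e / (C + 1)"] \<open>0 < e\<close> C(1) by auto
    have "\<bar>f y\<bar> = \<bar>f (y - d)\<bar>"
      using dual_space_diff[OF assms(1,2,3) d(1)] d(2) by simp
    also have "\<dots> \<le> C * (e / (C + 1))"
      using C d subspace_diff[OF assms(1,3) d(1)] by (meson mult_left_mono order_trans)
    also have "\<dots> \<le> e"
      using C(1) \<open>0 < e\<close> by (simp add: field_simps)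
    finally show ?thesis by simp
  qed
  then show ?thesis using field_le_epsilon[of "\<bar>f y\<bar>" 0] by simp
qed

definition in_hexagon :: "real \<Rightarrow> real \<Rightarrow> real \<Rightarrow> bool" where
  "in_hexagon a t s \<longleftrightarrow> \<bar>s\<bar> \<le> 1 \<and> \<bar>t\<bar> + (1 - a) * \<bar>s\<bar> \<le> 1"

definition hexagon_vertex :: "real \<Rightarrow> real \<Rightarrow> real \<Rightarrow> bool" where
  "hexagon_vertex a t s \<longleftrightarrow> (s = 0 \<and> \<bar>t\<bar> = 1) \<or> (\<bar>s\<bar> = 1 \<and> \<bar>t\<bar> = a)"

lemma abs_add_diff_sgn_mult:
  fixes t c :: real
  assumes "\<bar>c\<bar> \<le> \<bar>t\<bar>"
  shows "\<bar>t + sgn t * c\<bar> = \<bar>t\<bar> + c" "\<bar>t - sgn t * c\<bar> = \<bar>t\<bar> - c"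
  using assms by (auto simp: sgn_if abs_if split: if_splits)

lemma in_hexagon_edge_midpoint:
  assumes "0 < a" "a < 1" "0 < \<bar>s\<bar>" "\<bar>s\<bar> < 1" "\<bar>t\<bar> + (1 - a) * \<bar>s\<bar> = 1"
  shows "\<exists>p q. q \<noteq> 0 \<and> in_hexagon a (t + p) (s + q) \<and> in_hexagon a (t - p) (s - q)"
proof -
  have "(1 - a) * \<bar>s\<bar> < 1 - a" using assms mult_strict_left_mono[of "\<bar>s\<bar>" 1 "1 - a"] by simp
  then have "0 < \<bar>t\<bar>" using assms by linarith
  define d where "d = min (min \<bar>s\<bar> (1 - \<bar>s\<bar>)) \<bar>t\<bar>"
  have d: "0 < d" "d \<le> \<bar>s\<bar>" "\<bar>s\<bar> + d \<le> 1" "(1 - a) * d \<le> \<bar>t\<bar>"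
    using assms \<open>0 < \<bar>t\<bar>\<close> mult_left_le_one_le[of d "1 - a"] unfolding d_def by auto
  have "\<bar>(1 - a) * d\<bar> \<le> \<bar>t\<bar>" "\<bar>d\<bar> \<le> \<bar>s\<bar>" using assms d by simp_all
  note t = abs_add_diff_sgn_mult[OF this(1)] and s = abs_add_diff_sgn_mult[OF this(2)]
  have s': "\<bar>s + - sgn s * d\<bar> = \<bar>s\<bar> - d" "\<bar>s - - sgn s * d\<bar> = \<bar>s\<bar> + d"
    using s by simp_all
  show ?thesis
    unfolding in_hexagon_def
    by (rule exI[of _ "sgn t * ((1 - a) * d)"], rule exI[of _ "- sgn s * d"])
      (simp only: t s', use assms d in \<open>auto simp: sgn_if algebra_simps\<close>)
qed

lemma in_hexagon_non_vertex_midpoint: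
  assumes "0 < a" "a < 1" "in_hexagon a t s" "\<not> hexagon_vertex a t s"
  shows "\<exists>p q. (p \<noteq> 0 \<or> q \<noteq> 0) \<and> in_hexagon a (t + p) (s + q) \<and> in_hexagon a (t - p) (s - q)"
proof -
  have s: "\<bar>s\<bar> \<le> 1" and ts: "\<bar>t\<bar> + (1 - a) * \<bar>s\<bar> \<le> 1"
    using assms(3) unfolding in_hexagon_def by auto
  consider "\<bar>s\<bar> = 1" | "\<bar>s\<bar> < 1" "\<bar>t\<bar> + (1 - a) * \<bar>s\<bar> < 1"
    | "0 < \<bar>s\<bar>" "\<bar>s\<bar> < 1" "\<bar>t\<bar> + (1 - a) * \<bar>s\<bar> = 1" | "s = 0" "\<bar>t\<bar> = 1"
    using s ts by (cases "\<bar>s\<bar> = 1"; cases "s = 0") (auto simp: order.order_iff_strict)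
  then show ?thesis
  proof cases
    case 1
    then have "\<bar>t\<bar> < a" using ts assms(4) unfolding hexagon_vertex_def by auto
    have shift: "in_hexagon a (t + e) s" "in_hexagon a (t - e) s" if "\<bar>e\<bar> \<le> a - \<bar>t\<bar>" for e
      using that 1 abs_triangle_ineq[of t e] abs_triangle_ineq4[of t e] unfolding in_hexagon_def by simp_all
    show ?thesis
      by (rule exI[of _ "a - \<bar>t\<bar>"], rule exI[of _ 0]) (use shift \<open>\<bar>t\<bar> < a\<close> in auto)
  next
    case 2
    define d where "d = min (1 - \<bar>s\<bar>) (1 - \<bar>t\<bar> - (1 - a) * \<bar>s\<bar>)"
    have d: "0 < d" "\<bar>s\<bar> + d \<le> 1" "\<bar>t\<bar> + (1 - a) * \<bar>s\<bar> + d \<le> 1"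
      using 2 unfolding d_def by auto
    have "in_hexagon a t (s + e)" if "\<bar>e\<bar> \<le> d" for e
    proof -
      have "\<bar>s + e\<bar> \<le> \<bar>s\<bar> + d" using that abs_triangle_ineq[of s e] by linarith
      then have "(1 - a) * \<bar>s + e\<bar> \<le> (1 - a) * \<bar>s\<bar> + (1 - a) * d"
        using assms(2) mult_left_mono[of "\<bar>s + e\<bar>" "\<bar>s\<bar> + d" "1 - a"] by (simp add: distrib_left)
      moreover have "(1 - a) * d \<le> d" using assms(1) d(1) by (simp add: algebra_simps)
      ultimately show ?thesis using \<open>\<bar>s + e\<bar> \<le> \<bar>s\<bar> + d\<close> d unfolding in_hexagon_def by linarith
    qed
    note shift = this[of d] this[of "- d"]
    show ?thesis
      by (rule exI[of _ 0], rule exI[of _ d]) (use shift d(1) in auto)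
  next
    case 3
    then show ?thesis using in_hexagon_edge_midpoint[OF assms(1,2)] by blast
  next
    case 4
    then show ?thesis using assms(4) unfolding hexagon_vertex_def by simp
  qed
qed

lemma in_hexagon_pairing_le:
  assumes "in_hexagon a t s" "0 \<le> x" "x \<le> M" "0 \<le> z" "a * x + z \<le> M"
  shows "\<bar>t\<bar> * x + \<bar>s\<bar> * z \<le> M"
proof -
  have s: "\<bar>s\<bar> \<le> 1" and ts: "\<bar>t\<bar> + (1 - a) * \<bar>s\<bar> \<le> 1"
    using assms(1) unfolding in_hexagon_def by auto
  have "\<bar>s\<bar> * z \<le> \<bar>s\<bar> * (M - a * x)" using assms by (intro mult_left_mono) auto
  moreover have "\<bar>t\<bar> * x + \<bar>s\<bar> * (M - a * x) \<le> M"
  proof (cases "a * \<bar>s\<bar> \<le> \<bar>t\<bar>")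
    case True
    have "(\<bar>t\<bar> - a * \<bar>s\<bar>) * x \<le> (\<bar>t\<bar> - a * \<bar>s\<bar>) * M" using True assms by (intro mult_left_mono) auto
    moreover have "(\<bar>t\<bar> + (1 - a) * \<bar>s\<bar>) * M \<le> 1 * M" using ts assms by (intro mult_right_mono) auto
    ultimately show ?thesis by (simp add: algebra_simps)
  next
    case False
    have "(\<bar>t\<bar> - a * \<bar>s\<bar>) * x \<le> 0" using False assms by (simp add: mult_nonpos_nonneg)
    moreover have "\<bar>s\<bar> * M \<le> 1 * M" using s assms by (intro mult_right_mono) auto
    ultimately show ?thesis by (simp add: algebra_simps)
  qed
  ultimately show ?thesis by simp
qed

lemma apply_Bcontfun_nat:
  fixes f :: "nat \<Rightarrow> real"
  assumes "\<And>j. \<bar>f j\<bar> \<le> b"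
  shows "apply_bcontfun (Bcontfun f) = f"
  by (rule Bcontfun_inverse) (auto intro!: bcontfun_normI assms)

lemma abs_apply_bcontfun_le_norm: "\<bar>apply_bcontfun f x\<bar> \<le> norm (f :: 'a::topological_space \<Rightarrow>\<^sub>C real)"
  using norm_bounded[of f x] by simp

lemma norm_bcontfun_leI:
  "(\<And>x. \<bar>apply_bcontfun f x\<bar> \<le> b) \<Longrightarrow> norm (f :: 'a::topological_space \<Rightarrow>\<^sub>C real) \<le> b"
  using norm_bound[of f b] by simp

lemma bounded_linear_apply_bcontfun:
  "bounded_linear (\<lambda>f :: 'a::topological_space \<Rightarrow>\<^sub>C 'b::real_normed_vector. apply_bcontfun f x)"
  by (rule bounded_linear_intro[where K=1]) (auto simp: norm_bounded)

lemma apply_bcontfun_sum: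
  "finite A \<Longrightarrow> apply_bcontfun (\<Sum>i\<in>A. f i) x = (\<Sum>i\<in>A. apply_bcontfun (f i) x)"
  by (induction A rule: finite_induct) auto

lemma closed_Collect_tendsto_zero:
  fixes F :: "nat \<Rightarrow> 'a::metric_space \<Rightarrow> real"
  assumes lip: "\<And>n x y. \<bar>F n x - F n y\<bar> \<le> C * dist x y"
  shows "closed {x. (\<lambda>n. F n x) \<longlonglongrightarrow> 0}"
  unfolding closed_sequential_limits
proof (intro allI impI, elim conjE)
  fix x :: "nat \<Rightarrow> 'a" and l
  assume xs: "\<forall>i. x i \<in> {x. (\<lambda>n. F n x) \<longlonglongrightarrow> 0}" and lim: "x \<longlonglongrightarrow> l"
  have "\<exists>N. \<forall>n\<ge>N. \<bar>F n l\<bar> < r" if "0 < r" for r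
  proof -
    have "0 < r / 2 / (\<bar>C\<bar> + 1)" using \<open>0 < r\<close> by simp
    then obtain i where "dist (x i) l < r / 2 / (\<bar>C\<bar> + 1)"
      using lim unfolding LIMSEQ_def by blast
    then have i: "(\<bar>C\<bar> + 1) * dist (x i) l < r / 2"
      by (simp add: field_simps add_pos_nonneg)
    have "(\<lambda>n. F n (x i)) \<longlonglongrightarrow> 0" using xs by simp
    then obtain N where N: "\<And>n. N \<le> n \<Longrightarrow> \<bar>F n (x i)\<bar> < r / 2"
      using \<open>0 < r\<close> unfolding LIMSEQ_def dist_real_def by (metis diff_zero half_gt_zero)
    have "\<bar>F n l\<bar> < r" if "N \<le> n" for n
    proof -
      have "\<bar>F n (x i) - F n l\<bar> \<le> (\<bar>C\<bar> + 1) * dist (x i) l"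
        using lip[of n "x i" l] mult_right_mono[of C "\<bar>C\<bar> + 1" "dist (x i) l"] abs_ge_self[of C]
        by force
      then show ?thesis using N[OF that] i by linarith
    qed
    then show ?thesis by blast
  qed
  then show "l \<in> {x. (\<lambda>n. F n x) \<longlonglongrightarrow> 0}" by (simp add: LIMSEQ_def)
qed

locale hexagonal_space =
  fixes a :: real
  assumes a_pos: "0 < a" and a_less_1: "a < 1"
begin

definition zcoord :: "(nat \<Rightarrow>\<^sub>C real) \<Rightarrow> nat \<Rightarrow> real" where
  "zcoord y n = (y (2*n+1) - y (2*n+2)) / 2"

definition X :: "(nat \<Rightarrow>\<^sub>C real) set" where
  "X = {y. zcoord y \<longlonglongrightarrow> 0 \<and> (\<forall>n. y (2*n+1) + y (2*n+2) = 2 * a * y 0)}"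

definition u0 :: "nat \<Rightarrow>\<^sub>C real" where
  "u0 = Bcontfun (\<lambda>j. if j = 0 then 1 else a)"

definition v :: "nat \<Rightarrow> nat \<Rightarrow>\<^sub>C real" where
  "v n = Bcontfun (\<lambda>j. if j = 2*n+1 then 1 else if j = 2*n+2 then -1 else 0)"

lemma u0_apply: "u0 j = (if j = 0 then 1 else a)"
  unfolding u0_def using a_pos a_less_1 by (subst apply_Bcontfun_nat[where b=1]) auto

lemma v_apply: "v n j = (if j = 2*n+1 then 1 else if j = 2*n+2 then -1 else 0)"
  unfolding v_def by (subst apply_Bcontfun_nat[where b=1]) auto

lemma v_apply_simps [simp]:
  "v n 0 = 0" "v n (Suc (2*k)) = (if n = k then 1 else 0)" "v n (Suc (Suc (2*k))) = (if n = k then -1 else 0)"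
  by (simp_all add: v_apply)

lemma zcoord_add: "zcoord (x + y) n = zcoord x n + zcoord y n"
  and zcoord_diff: "zcoord (x - y) n = zcoord x n - zcoord y n"
  and zcoord_scaleR: "zcoord (c *\<^sub>R x) n = c * zcoord x n"
  unfolding zcoord_def by (simp_all add: field_simps)

lemma zcoord_u0 [simp]: "zcoord u0 = (\<lambda>_. 0)"
  and zcoord_v [simp]: "zcoord (v m) n = (if n = m then 1 else 0)"
  unfolding zcoord_def by (simp_all add: u0_apply v_apply fun_eq_iff)

lemma abs_zcoord_le_norm: "\<bar>zcoord y n\<bar> \<le> norm y"
  using abs_apply_bcontfun_le_norm[of y "2*n+1"] abs_apply_bcontfun_le_norm[of y "2*n+2"]
  unfolding zcoord_def by simp

lemma X_odd: "y \<in> X \<Longrightarrow> y (2*n+1) = a * y 0 + zcoord y n"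
  and X_even: "y \<in> X \<Longrightarrow> y (2*n+2) = a * y 0 - zcoord y n"
  unfolding X_def zcoord_def by (auto simp: field_simps)

lemma zcoord_tendsto_0: "y \<in> X \<Longrightarrow> zcoord y \<longlonglongrightarrow> 0"
  unfolding X_def by simp

lemma subspace_X: "subspace X"
  unfolding subspace_def
proof (intro conjI ballI allI)
  show "0 \<in> X" unfolding X_def zcoord_def by simp
next
  fix x y assume x: "x \<in> X" and y: "y \<in> X"
  have "(x + y) (2*n+1) + (x + y) (2*n+2) = 2 * a * (x + y) 0" for n
    using X_odd[OF x, of n] X_even[OF x, of n] X_odd[OF y, of n] X_even[OF y, of n]
    by (simp add: algebra_simps)
  moreover have "zcoord (x + y) \<longlonglongrightarrow> 0"
    unfolding zcoord_add by (intro tendsto_add_zero zcoord_tendsto_0 x y)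
  ultimately show "x + y \<in> X" unfolding X_def by simp
next
  fix c x assume x: "x \<in> X"
  have "(c *\<^sub>R x) (2*n+1) + (c *\<^sub>R x) (2*n+2) = c * (x (2*n+1) + x (2*n+2))" for n
    by (simp add: algebra_simps)
  then have "(c *\<^sub>R x) (2*n+1) + (c *\<^sub>R x) (2*n+2) = 2 * a * (c *\<^sub>R x) 0" for n
    using x unfolding X_def by simp
  moreover have "zcoord (c *\<^sub>R x) \<longlonglongrightarrow> 0"
    unfolding zcoord_scaleR by (intro tendsto_mult_right_zero zcoord_tendsto_0 x)
  ultimately show "c *\<^sub>R x \<in> X" unfolding X_def by simp
qed

lemma u0_in_X: "u0 \<in> X"
  unfolding X_def by (simp add: u0_apply)

lemma v_in_X: "v m \<in> X"
proof -
  have "\<forall>\<^sub>F n in sequentially. zcoord (v m) n = 0"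
    using eventually_gt_at_top[of m] by eventually_elim simp
  then show ?thesis
    unfolding X_def by (simp add: tendsto_eventually v_apply)
qed

lemma closed_X: "closed X"
proof -
  have "closed {y. zcoord y \<longlonglongrightarrow> 0}"
  proof (rule closed_Collect_tendsto_zero[where C=1])
    fix n y w
    show "\<bar>zcoord y n - zcoord w n\<bar> \<le> 1 * dist y w"
      using abs_zcoord_le_norm[of "y - w" n] by (simp add: zcoord_diff dist_norm)
  qed
  moreover have "closed {y. apply_bcontfun (y :: nat \<Rightarrow>\<^sub>C real) (2*n+1) + y (2*n+2) = 2 * a * y 0}" for n
    by (intro closed_Collect_eq continuous_intros linear_continuous_on
        bounded_linear.linear bounded_linear_apply_bcontfun)
  ultimately have "closed ({y. zcoord y \<longlonglongrightarrow> 0}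
      \<inter> (\<Inter>n. {y. apply_bcontfun y (2*n+1) + y (2*n+2) = 2 * a * y 0}))"
    by (intro closed_Int closed_INT) auto
  moreover have "X = {y. zcoord y \<longlonglongrightarrow> 0}
      \<inter> (\<Inter>n. {y. apply_bcontfun y (2*n+1) + y (2*n+2) = 2 * a * y 0})"
    unfolding X_def by auto
  ultimately show ?thesis by simp
qed

lemma norm_X_ge: "y \<in> X \<Longrightarrow> a * \<bar>y 0\<bar> + \<bar>zcoord y n\<bar> \<le> norm y"
proof -
  assume y: "y \<in> X"
  have "max \<bar>p + z\<bar> \<bar>p - z\<bar> = \<bar>p\<bar> + \<bar>z\<bar>" for p z :: real
    by (auto simp: max_def abs_if)
  then show ?thesis
    using abs_apply_bcontfun_le_norm[of y "2*n+1"] abs_apply_bcontfun_le_norm[of y "2*n+2"]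
      X_odd[OF y, of n] X_even[OF y, of n] a_pos
    by (metis abs_mult abs_of_pos max.boundedI)
qed

lemma norm_X_le:
  assumes "y \<in> X" "\<bar>y 0\<bar> \<le> M" "\<And>n. a * \<bar>y 0\<bar> + \<bar>zcoord y n\<bar> \<le> M"
  shows "norm y \<le> M"
proof (rule norm_bcontfun_leI)
  fix j :: nat
  have "j = 0 \<or> (\<exists>n. j = 2*n+1) \<or> (\<exists>n. j = 2*n+2)" by presburger
  moreover have "\<bar>a * y 0 + z\<bar> \<le> a * \<bar>y 0\<bar> + \<bar>z\<bar>" "\<bar>a * y 0 - z\<bar> \<le> a * \<bar>y 0\<bar> + \<bar>z\<bar>" for z
    using a_pos abs_triangle_ineq[of "a * y 0" z] abs_triangle_ineq4[of "a * y 0" z]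
    by (simp_all add: abs_mult)
  ultimately show "\<bar>y j\<bar> \<le> M"
    using assms X_odd[OF assms(1)] X_even[OF assms(1)] by (metis order_trans)
qed

lemma norm_u0: "norm u0 \<le> 1"
  by (rule norm_bcontfun_leI) (use a_pos a_less_1 in \<open>simp add: u0_apply\<close>)

lemma norm_v: "norm (v n) \<le> 1"
  by (rule norm_bcontfun_leI) (simp add: v_apply)

definition trunc :: "nat \<Rightarrow> (nat \<Rightarrow>\<^sub>C real) \<Rightarrow> nat \<Rightarrow>\<^sub>C real" where
  "trunc N y = y 0 *\<^sub>R u0 + (\<Sum>k<N. zcoord y k *\<^sub>R v k)"

lemma trunc_in_X: "trunc N y \<in> X"
  unfolding trunc_def
  by (intro subspace_add[OF subspace_X] subspace_scale[OF subspace_X] subspace_sum[OF subspace_X]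
      u0_in_X v_in_X)

lemma zcoord_sum: "finite A \<Longrightarrow> zcoord (\<Sum>i\<in>A. f i) n = (\<Sum>i\<in>A. zcoord (f i) n)"
  unfolding zcoord_def by (simp add: apply_bcontfun_sum sum_subtractf flip: sum_divide_distrib)

lemma apply_trunc_0 [simp]: "trunc N y 0 = y 0"
  and zcoord_trunc: "zcoord (trunc N y) n = (if n < N then zcoord y n else 0)"
  unfolding trunc_def
  by (simp_all add: apply_bcontfun_sum u0_apply zcoord_add zcoord_scaleR zcoord_sum if_distrib
      cong: if_cong)

lemma norm_diff_trunc_le:
  assumes "y \<in> X" "0 \<le> e" "\<And>k. N \<le> k \<Longrightarrow> \<bar>zcoord y k\<bar> \<le> e"
  shows "norm (y - trunc N y) \<le> e"
  using assms subspace_diff[OF subspace_X assms(1) trunc_in_X, of N]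
  by (intro norm_X_le) (auto simp: zcoord_diff zcoord_trunc a_pos)

lemma trunc_approx:
  assumes "y \<in> X" "0 < e"
  obtains N where "norm (y - trunc N y) \<le> e"
proof -
  obtain N where "\<And>k. N \<le> k \<Longrightarrow> \<bar>zcoord y k\<bar> < e"
    using zcoord_tendsto_0[OF assms(1)] assms(2) unfolding LIMSEQ_def dist_real_def by auto
  then show thesis
    using that norm_diff_trunc_le[OF assms(1)] assms(2) by (meson less_imp_le)
qed

lemma dual_space_trunc:
  "f \<in> dual_space X \<Longrightarrow> f (trunc N y) = y 0 * f u0 + (\<Sum>k<N. zcoord y k * f (v k))"
  unfolding trunc_def
  by (simp add: dual_space_add dual_space_scale dual_space_sum[OF subspace_X] u0_in_X v_in_X
      subspace_sum[OF subspace_X] subspace_scale[OF subspace_X])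

lemma dual_space_eqI:
  assumes f: "f \<in> dual_space X" and g: "g \<in> dual_space X"
    and "f u0 = g u0" "\<And>k. f (v k) = g (v k)"
  shows "f = g"
proof
  fix y
  have fg: "(\<lambda>x. f x + (-1) * g x) \<in> dual_space X"
    by (rule dual_space_add_scaled[OF f g])
  show "f y = g y"
  proof (cases "y \<in> X")
    case True
    have "f d + (-1) * g d = 0" if "d = trunc N y" for d N
      using assms unfolding that by (simp add: dual_space_trunc)
    then have "f y + (-1) * g y = 0"
      using trunc_in_X trunc_approx[OF True]
      by (intro dual_space_eq_zero_if_zero_on_dense[OF subspace_X fg True]) metis
    then show ?thesis by simp
  qed (simp add: dual_space_outside[OF f] dual_space_outside[OF g])
qed

lemma v_inj: "inj v"
proof (rule injI)
  fix j k assume "v j = v k"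
  then have "v j (2*k+1) = v k (2*k+1)" by simp
  then show "j = k" by (simp split: if_splits)
qed

lemma independent_range_v: "independent (range v)"
  unfolding real_vector.independent_explicit_finite_subsets
proof (intro allI impI ballI)
  fix S u w
  assume S: "S \<subseteq> range v" "finite S" and sum0: "(\<Sum>w\<in>S. u w *\<^sub>R w) = 0" and "w \<in> S"
  obtain k where k: "w = v k" using S \<open>w \<in> S\<close> by blast
  have zk: "zcoord w' k = (if w' = w then 1 else 0)" if "w' \<in> S" for w'
    using that S v_inj unfolding k by (auto simp: inj_eq)
  have "zcoord (\<Sum>w\<in>S. u w *\<^sub>R w) k = (\<Sum>w'\<in>S. u w' * zcoord w' k)"
    using S(2) by (simp add: zcoord_sum zcoord_scaleR)
  also have "\<dots> = (\<Sum>w'\<in>S. if w' = w then u w' else 0)"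
    using zk by (intro sum.cong) auto
  also have "\<dots> = u w"
    using S(2) \<open>w \<in> S\<close> by simp
  finally show "u w = 0" using sum0 by (simp add: zcoord_def)
qed

lemma X_not_finite_dimensional: "\<not> (\<exists>B. finite B \<and> X \<subseteq> span B)"
proof
  assume "\<exists>B. finite B \<and> X \<subseteq> span B"
  then obtain B where "finite B" "range v \<subseteq> span B"
    using v_in_X by blast
  then have "finite (range v)"
    using independent_span_bound[OF _ independent_range_v] by blast
  then show False
    using finite_imageD[OF _ inj_on_subset[OF v_inj]] by auto
qed

definition psi :: "real \<Rightarrow> real \<Rightarrow> nat \<Rightarrow> (nat \<Rightarrow>\<^sub>C real) \<Rightarrow> real" where
  "psi t s m y = (if y \<in> X then t * y 0 + s * zcoord y m else 0)"

lemma psi_u0 [simp]: "psi t s m u0 = t"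
  and psi_v [simp]: "psi t s m (v k) = (if k = m then s else 0)"
  by (simp_all add: psi_def u0_in_X v_in_X u0_apply)

lemma psi_in_dual_space: "psi t s m \<in> dual_space X"
proof (rule dual_spaceI[where C = "\<bar>t\<bar> + \<bar>s\<bar>"])
  fix x y assume "x \<in> X" "y \<in> X"
  then show "psi t s m (x + y) = psi t s m x + psi t s m y"
    using subspace_add[OF subspace_X] by (simp add: psi_def zcoord_add algebra_simps)
next
  fix c x assume "x \<in> X"
  then show "psi t s m (c *\<^sub>R x) = c * psi t s m x"
    using subspace_scale[OF subspace_X] by (simp add: psi_def zcoord_scaleR algebra_simps)
next
  fix y assume "y \<in> X"
  have "\<bar>t * y 0 + s * zcoord y m\<bar> \<le> \<bar>t\<bar> * norm y + \<bar>s\<bar> * norm y"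
    using abs_triangle_ineq[of "t * y 0" "s * zcoord y m"]
      mult_left_mono[OF abs_apply_bcontfun_le_norm[of y 0], of "\<bar>t\<bar>"]
      mult_left_mono[OF abs_zcoord_le_norm[of y m], of "\<bar>s\<bar>"]
    by (simp add: abs_mult)
  then show "\<bar>psi t s m y\<bar> \<le> (\<bar>t\<bar> + \<bar>s\<bar>) * norm y"
    using \<open>y \<in> X\<close> by (simp add: psi_def algebra_simps)
qed (simp add: psi_def)

lemma psi_in_dual_ball: "in_hexagon a t s \<Longrightarrow> psi t s m \<in> dual_ball X 1"
proof (rule dual_ballI[OF psi_in_dual_space])
  fix y assume "in_hexagon a t s" "y \<in> X"
  have "\<bar>psi t s m y\<bar> \<le> \<bar>t\<bar> * \<bar>y 0\<bar> + \<bar>s\<bar> * \<bar>zcoord y m\<bar>"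
    using \<open>y \<in> X\<close> by (simp add: psi_def abs_mult[symmetric] abs_triangle_ineq)
  also have "\<dots> \<le> norm y"
    using \<open>in_hexagon a t s\<close> abs_apply_bcontfun_le_norm[of y 0] norm_X_ge[OF \<open>y \<in> X\<close>, of m]
    by (intro in_hexagon_pairing_le) auto
  finally show "\<bar>psi t s m y\<bar> \<le> 1 * norm y" by simp
qed

lemma dual_space_eq_psi:
  "h \<in> dual_space X \<Longrightarrow> (\<And>k. k \<noteq> m \<Longrightarrow> h (v k) = 0) \<Longrightarrow> h = psi (h u0) (h (v m)) m"
  by (rule dual_space_eqI[OF _ psi_in_dual_space]) auto

lemma dual_ball_in_hexagon:
  assumes h: "h \<in> dual_ball X 1"
  shows "in_hexagon a (h u0) (h (v m))"
proof -
  have hd: "h \<in> dual_space X" and hb: "\<And>x. x \<in> X \<Longrightarrow> \<bar>h x\<bar> \<le> norm x"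
    using dual_ballD[OF h] by auto
  define w where "w = sgn (h u0) *\<^sub>R u0 + ((1 - a) * sgn (h (v m))) *\<^sub>R v m"
  have "w \<in> X"
    unfolding w_def by (intro subspace_add[OF subspace_X] subspace_scale[OF subspace_X] u0_in_X v_in_X)
  have sgn_times: "sgn x * x = \<bar>x\<bar>" for x :: real by (simp add: sgn_if)
  have "h w = \<bar>h u0\<bar> + (1 - a) * \<bar>h (v m)\<bar>"
    unfolding w_def
    by (simp add: dual_space_add[OF hd] dual_space_scale[OF hd] subspace_scale[OF subspace_X]
        u0_in_X v_in_X mult.assoc sgn_times)
  moreover have "norm w \<le> 1"
  proof (rule norm_X_le[OF \<open>w \<in> X\<close>])
    have "\<bar>sgn (h u0)\<bar> \<le> 1" "\<bar>sgn (h (v m))\<bar> \<le> 1" by (simp_all add: abs_sgn_eq)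
    then have "a * \<bar>sgn (h u0)\<bar> \<le> a" "(1 - a) * \<bar>sgn (h (v m))\<bar> \<le> 1 - a"
      using a_pos a_less_1 by (auto intro: mult_left_le)
    moreover have "w 0 = sgn (h u0)" "zcoord w n = (if n = m then (1 - a) * sgn (h (v m)) else 0)" for n
      unfolding w_def by (simp_all add: u0_apply zcoord_add zcoord_scaleR)
    ultimately show "\<bar>w 0\<bar> \<le> 1" "a * \<bar>w 0\<bar> + \<bar>zcoord w n\<bar> \<le> 1" for n
      using a_less_1 by (auto simp: abs_mult)
  qed
  ultimately have "\<bar>h u0\<bar> + (1 - a) * \<bar>h (v m)\<bar> \<le> 1"
    using hb[OF \<open>w \<in> X\<close>] by simp
  moreover have "\<bar>h (v m)\<bar> \<le> 1"
    using hb[OF v_in_X, of m] norm_v[of m] by simp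
  ultimately show ?thesis unfolding in_hexagon_def by simp
qed

text \<open>Evaluate h at y with its n-th and m-th z-coordinates replaced by \<plusminus>M, which does not
  increase the norm.\<close>

lemma dual_ball_two_zcoords_le:
  assumes h: "h \<in> dual_ball X 1" and y: "y \<in> X" and "n \<noteq> m"
  shows "\<bar>h y - zcoord y n * h (v n) - zcoord y m * h (v m)\<bar>
           + (\<bar>h (v n)\<bar> + \<bar>h (v m)\<bar>) * max \<bar>zcoord y n\<bar> \<bar>zcoord y m\<bar> \<le> norm y"
proof -
  have hd: "h \<in> dual_space X" using dual_ballD[OF h] by simp
  define W where "W = h y - zcoord y n * h (v n) - zcoord y m * h (v m)"
  define M where "M = max \<bar>zcoord y n\<bar> \<bar>zcoord y m\<bar>"
  define \<sigma> :: real where "\<sigma> = (if 0 \<le> W then 1 else -1)"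
  define p q where "p = \<sigma> * sgn (h (v n)) * M" and "q = \<sigma> * sgn (h (v m)) * M"
  define y' where "y' = y + (p - zcoord y n) *\<^sub>R v n + (q - zcoord y m) *\<^sub>R v m"
  have "y' \<in> X"
    unfolding y'_def by (intro subspace_add[OF subspace_X] subspace_scale[OF subspace_X] y v_in_X)
  have sgn_times: "x * sgn x = \<bar>x\<bar>" for x :: real by (simp add: sgn_if)
  have "h y' = h y + (p - zcoord y n) * h (v n) + (q - zcoord y m) * h (v m)"
    unfolding y'_def
    by (simp add: dual_space_add[OF hd] dual_space_scale[OF hd] y v_in_X subspace_add[OF subspace_X]
        subspace_scale[OF subspace_X])
  also have "\<dots> = W + \<sigma> * ((\<bar>h (v n)\<bar> + \<bar>h (v m)\<bar>) * M)"
    unfolding W_def p_def q_def by (simp add: algebra_simps sgn_times)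
  finally have "h y' = W + \<sigma> * ((\<bar>h (v n)\<bar> + \<bar>h (v m)\<bar>) * M)" .
  moreover have "0 \<le> (\<bar>h (v n)\<bar> + \<bar>h (v m)\<bar>) * M" unfolding M_def by simp
  ultimately have "\<bar>h y'\<bar> = \<bar>W\<bar> + (\<bar>h (v n)\<bar> + \<bar>h (v m)\<bar>) * M"
    unfolding \<sigma>_def by auto
  moreover have "norm y' \<le> norm y"
  proof (rule norm_X_le[OF \<open>y' \<in> X\<close>])
    have "\<bar>p\<bar> \<le> M" "\<bar>q\<bar> \<le> M"
      unfolding p_def q_def \<sigma>_def M_def by (auto simp: abs_mult abs_sgn_eq)
    moreover have "a * \<bar>y 0\<bar> + M \<le> norm y"
      unfolding M_def using norm_X_ge[OF y, of n] norm_X_ge[OF y, of m] by auto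
    moreover have "y' 0 = y 0"
      and "zcoord y' k = (if k = n then p else if k = m then q else zcoord y k)" for k
      unfolding y'_def using \<open>n \<noteq> m\<close> by (simp_all add: zcoord_add zcoord_scaleR)
    ultimately show "\<bar>y' 0\<bar> \<le> norm y" "a * \<bar>y' 0\<bar> + \<bar>zcoord y' k\<bar> \<le> norm y" for k
      using abs_apply_bcontfun_le_norm[of y 0] norm_X_ge[OF y, of k] by auto
  qed
  ultimately show ?thesis
    using dual_ballD(2)[OF h \<open>y' \<in> X\<close>] unfolding W_def M_def by simp
qed

text \<open>Shifting weight between v n and v m keeps h inside the dual ball, so an extreme h cannot
  charge both.\<close>

lemma dual_ext_v_zero_or_zero:
  assumes h: "h \<in> dual_ext X" and "n \<noteq> m"
  shows "h (v n) = 0 \<or> h (v m) = 0"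
proof (rule ccontr)
  assume "\<not> ?thesis"
  then have nz: "h (v n) \<noteq> 0" "h (v m) \<noteq> 0" by auto
  have hb: "h \<in> dual_ball X 1" and hd: "h \<in> dual_space X"
    using dual_extD(1)[OF h] dual_ballD(1) by auto
  define G where "G c y = h y + c * psi 0 (sgn (h (v n))) n y + (- c) * psi 0 (sgn (h (v m))) m y" for c y
  have "G c \<in> dual_ball X 1" if c: "\<bar>c\<bar> \<le> \<bar>h (v n)\<bar>" "\<bar>c\<bar> \<le> \<bar>h (v m)\<bar>" for c
  proof (rule dual_ballI)
    show "G c \<in> dual_space X"
      unfolding G_def[abs_def]
      by (intro dual_space_add_scaled psi_in_dual_space hd)
    fix y assume "y \<in> X"
    define W where "W = h y - zcoord y n * h (v n) - zcoord y m * h (v m)"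
    define M where "M = max \<bar>zcoord y n\<bar> \<bar>zcoord y m\<bar>"
    have "G c y = W + zcoord y n * (h (v n) + sgn (h (v n)) * c) + zcoord y m * (h (v m) - sgn (h (v m)) * c)"
      using \<open>y \<in> X\<close> unfolding G_def psi_def W_def by (simp add: algebra_simps)
    also have "\<bar>\<dots>\<bar> \<le> \<bar>W\<bar> + \<bar>zcoord y n\<bar> * (\<bar>h (v n)\<bar> + c) + \<bar>zcoord y m\<bar> * (\<bar>h (v m)\<bar> - c)"
      using abs_triangle_ineq[of "W + zcoord y n * (h (v n) + sgn (h (v n)) * c)"
          "zcoord y m * (h (v m) - sgn (h (v m)) * c)"]
        abs_triangle_ineq[of W "zcoord y n * (h (v n) + sgn (h (v n)) * c)"]
      unfolding abs_mult abs_add_diff_sgn_mult[OF c(1)] abs_add_diff_sgn_mult[OF c(2)] by linarith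
    also have "\<dots> \<le> \<bar>W\<bar> + M * (\<bar>h (v n)\<bar> + c) + M * (\<bar>h (v m)\<bar> - c)"
      using c unfolding M_def by (intro add_mono mult_right_mono) auto
    also have "\<dots> = \<bar>W\<bar> + (\<bar>h (v n)\<bar> + \<bar>h (v m)\<bar>) * M"
      by (simp add: algebra_simps)
    also have "\<dots> \<le> norm y"
      unfolding W_def M_def by (rule dual_ball_two_zcoords_le[OF hb \<open>y \<in> X\<close> \<open>n \<noteq> m\<close>])
    finally show "\<bar>G c y\<bar> \<le> 1 * norm y" by simp
  qed
  moreover define e where "e = min \<bar>h (v n)\<bar> \<bar>h (v m)\<bar>"
  ultimately have "G e \<in> dual_ball X 1" "G (- e) \<in> dual_ball X 1" by auto
  moreover have "h y = (G e y + G (- e) y) / 2" for y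
    unfolding G_def by simp
  ultimately have "G e = G (- e)"
    using dual_extD(2)[OF h] by blast
  then have "e * sgn (h (v n)) = - e * sgn (h (v n))"
    using fun_cong[of "G e" "G (- e)" "v n"] \<open>n \<noteq> m\<close> unfolding G_def by simp
  then show False
    using nz unfolding e_def by (auto simp: sgn_if min_def split: if_splits)
qed

lemma dual_ext_eq_psi_vertex:
  assumes h: "h \<in> dual_ext X"
  obtains m where "\<And>k. k \<noteq> m \<Longrightarrow> h (v k) = 0" "hexagon_vertex a (h u0) (h (v m))"
    "h = psi (h u0) (h (v m)) m"
proof -
  have hb: "h \<in> dual_ball X 1" and hd: "h \<in> dual_space X"
    using dual_extD(1)[OF h] dual_ballD(1) by auto
  obtain m where m: "\<And>k. k \<noteq> m \<Longrightarrow> h (v k) = 0"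
    using dual_ext_v_zero_or_zero[OF h] by metis
  define t s where "t = h u0" and "s = h (v m)"
  have h_eq: "h = psi t s m"
    unfolding t_def s_def by (rule dual_space_eq_psi[OF hd m])
  have "hexagon_vertex a t s"
  proof (rule ccontr)
    assume "\<not> hexagon_vertex a t s"
    then obtain p q where pq: "p \<noteq> 0 \<or> q \<noteq> 0" "in_hexagon a (t + p) (s + q)" "in_hexagon a (t - p) (s - q)"
      using in_hexagon_non_vertex_midpoint[OF a_pos a_less_1 dual_ball_in_hexagon[OF hb]]
      unfolding t_def s_def by blast
    have "h y = (psi (t + p) (s + q) m y + psi (t - p) (s - q) m y) / 2" for y
      unfolding h_eq psi_def by (simp add: algebra_simps)
    then have eq: "psi (t + p) (s + q) m = psi (t - p) (s - q) m"
      by (rule dual_extD(2)[OF h psi_in_dual_ball[OF pq(2)] psi_in_dual_ball[OF pq(3)]])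
    have "t + p = t - p" using fun_cong[OF eq, of u0] by simp
    moreover have "s + q = s - q" using fun_cong[OF eq, of "v m"] by simp
    ultimately show False using pq(1) by simp
  qed
  then show thesis
    using that m h_eq unfolding t_def s_def by blast
qed

lemma dual_ext_values:
  assumes "h \<in> dual_ext X"
  shows "\<bar>h u0\<bar> = 1 \<or> \<bar>h u0\<bar> = a" "h (v k) = 0 \<or> \<bar>h (v k)\<bar> = 1"
  using dual_ext_eq_psi_vertex[OF assms] unfolding hexagon_vertex_def by metis+

lemma dual_ext_close_eq:
  assumes "h1 \<in> dual_ext X" "h2 \<in> dual_ext X"
  shows "\<bar>h1 u0 - h2 u0\<bar> < 1 - a \<Longrightarrow> \<bar>h1 u0 - h2 u0\<bar> < 2 * a \<Longrightarrow> h1 u0 = h2 u0"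
    and "\<bar>h1 (v k) - h2 (v k)\<bar> < 1 \<Longrightarrow> h1 (v k) = h2 (v k)"
  using dual_ext_values(1)[OF assms(1)] dual_ext_values(1)[OF assms(2)]
    dual_ext_values(2)[OF assms(1), of k] dual_ext_values(2)[OF assms(2), of k] a_pos a_less_1
  by (auto simp: abs_if split: if_splits)

lemma dual_ext_v_zero_if_abs_u0_eq_1:
  assumes "h \<in> dual_ext X" "\<bar>h u0\<bar> = 1"
  shows "h (v k) = 0"
  using dual_ext_eq_psi_vertex[OF assms(1)] assms(2) a_less_1 unfolding hexagon_vertex_def
  by (metis less_irrefl)

lemma dual_ext_eqI:
  assumes h1: "h1 \<in> dual_ext X" and h2: "h2 \<in> dual_ext X"
    and u0: "h1 u0 = h2 u0" and vk: "\<And>k. k < N \<Longrightarrow> h1 (v k) = h2 (v k)"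
    and "\<bar>h1 u0\<bar> = 1 \<or> (\<exists>k<N. h1 (v k) \<noteq> 0)"
  shows "h1 = h2"
proof -
  have "h1 (v j) = h2 (v j)" for j
    using \<open>\<bar>h1 u0\<bar> = 1 \<or> (\<exists>k<N. h1 (v k) \<noteq> 0)\<close>
  proof (elim disjE exE conjE)
    assume "\<bar>h1 u0\<bar> = 1"
    then show ?thesis
      using u0 dual_ext_v_zero_if_abs_u0_eq_1[OF h1] dual_ext_v_zero_if_abs_u0_eq_1[OF h2] by simp
  next
    fix k assume "k < N" "h1 (v k) \<noteq> 0"
    then show ?thesis
      using vk dual_ext_v_zero_or_zero[OF h1, of j k] dual_ext_v_zero_or_zero[OF h2, of j k]
      by (cases "j = k") auto
  qed
  then show ?thesis
    using dual_space_eqI dual_extD(1) dual_ballD(1) h1 h2 u0 by metis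
qed

text \<open>Unless |h u0| = a and h vanishes on v 0, \<dots>, v (N - 1), an extreme point h is determined by
  its (discretely distributed) values on u0 and these v k, so it is isolated among extreme points
  and cannot be one of those approximating the accumulation point g.\<close>

lemma weak_star_acc_near_ext:
  assumes g: "g \<in> weak_star_acc X (dual_ext X)" and \<delta>: "0 < \<delta>" "2 * \<delta> \<le> 1 - a" "\<delta> \<le> a"
  obtains h where "h \<in> dual_ext X" "\<bar>h u0 - g u0\<bar> < \<delta>" "\<And>k. k < N \<Longrightarrow> \<bar>h (v k) - g (v k)\<bar> < \<delta>"
    "\<bar>h u0\<bar> = a" "\<And>k. k < N \<Longrightarrow> h (v k) = 0"
proof -
  have gd: "g \<in> dual_space X"
    and near: "\<And>F \<epsilon>. finite F \<Longrightarrow> F \<subseteq> X \<Longrightarrow> 0 < \<epsilon> \<Longrightarrow>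
                 \<exists>h\<in>dual_ext X. h \<noteq> g \<and> (\<forall>x\<in>F. \<bar>h x - g x\<bar> < \<epsilon>)"
    using g unfolding weak_star_acc_def by auto
  define F where "F = insert u0 (v ` {..<N})"
  have F: "finite F" "F \<subseteq> X" unfolding F_def using u0_in_X v_in_X by auto
  obtain h where h: "h \<in> dual_ext X" "h \<noteq> g" "\<forall>x\<in>F. \<bar>h x - g x\<bar> < \<delta>"
    using near[OF F \<delta>(1)] by blast
  have near_u0: "\<bar>h u0 - g u0\<bar> < \<delta>" and near_v: "\<And>k. k < N \<Longrightarrow> \<bar>h (v k) - g (v k)\<bar> < \<delta>"
    using h(3) unfolding F_def by auto
  have "\<bar>h u0\<bar> \<noteq> 1 \<and> (\<forall>k<N. h (v k) = 0)"
  proof (rule ccontr)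
    assume bad: "\<not> ?thesis"
    obtain p where p: "h p \<noteq> g p" using h(2) by auto
    have "p \<in> X"
      using p dual_space_outside[OF gd, of p] dual_space_outside[of h X p]
        dual_ballD(1)[OF dual_extD(1)[OF h(1)]] by (cases "p \<in> X") auto
    define \<epsilon> where "\<epsilon> = min \<delta> \<bar>h p - g p\<bar>"
    have "0 < \<epsilon>" unfolding \<epsilon>_def using \<delta>(1) p by simp
    then obtain h' where h': "h' \<in> dual_ext X" "\<forall>x\<in>insert p F. \<bar>h' x - g x\<bar> < \<epsilon>"
      using near[of "insert p F" \<epsilon>] F \<open>p \<in> X\<close> by auto
    have close: "\<bar>h x - h' x\<bar> < 2 * \<delta>" if "x \<in> F" for x
    proof -
      have "\<bar>h x - g x\<bar> < \<delta>" "\<bar>h' x - g x\<bar> < \<delta>"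
        using h(3) h'(2) that unfolding \<epsilon>_def by auto
      then show ?thesis using abs_triangle_ineq4[of "h x - g x" "h' x - g x"] by simp
    qed
    have eq_u0: "h u0 = h' u0"
      using close[of u0] \<delta> dual_ext_close_eq(1)[OF h(1) h'(1)] unfolding F_def by simp
    have eq_v: "h (v k) = h' (v k)" if "k < N" for k
      using close[of "v k"] \<delta> a_less_1 that dual_ext_close_eq(2)[OF h(1) h'(1)] unfolding F_def by simp
    have "\<bar>h u0\<bar> = 1 \<or> (\<exists>k<N. h (v k) \<noteq> 0)" using bad by blast
    then have "h = h'" using dual_ext_eqI[OF h(1) h'(1) eq_u0 eq_v] by blast
    moreover have "\<bar>h' p - g p\<bar> < \<bar>h p - g p\<bar>" using h'(2) unfolding \<epsilon>_def by simp
    ultimately show False by simp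
  qed
  moreover have "\<bar>h u0\<bar> = 1 \<or> \<bar>h u0\<bar> = a" by (rule dual_ext_values(1)[OF h(1)])
  ultimately show thesis
    using that[OF h(1) near_u0 near_v] by auto
qed

lemma weak_star_acc_values:
  assumes g: "g \<in> weak_star_acc X (dual_ext X)"
  shows "\<bar>g u0\<bar> \<le> a" "g (v k) = 0"
proof -
  have "\<bar>g u0\<bar> \<le> a + \<epsilon> \<and> \<bar>g (v k)\<bar> \<le> 0 + \<epsilon>" if "0 < \<epsilon>" for \<epsilon>
  proof -
    define \<delta> where "\<delta> = min \<epsilon> (min ((1 - a) / 2) a)"
    have "0 < \<delta>" using that a_pos a_less_1 unfolding \<delta>_def by simp
    moreover have "\<delta> \<le> (1 - a) / 2" "\<delta> \<le> a" "\<delta> \<le> \<epsilon>"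
      unfolding \<delta>_def by (intro min.coboundedI2 min.cobounded1 min.cobounded2)+
    ultimately have "0 < \<delta>" "2 * \<delta> \<le> 1 - a" "\<delta> \<le> a" "\<delta> \<le> \<epsilon>" by simp_all
    then obtain h where "\<bar>h u0 - g u0\<bar> < \<delta>" "\<bar>h (v k) - g (v k)\<bar> < \<delta>" "\<bar>h u0\<bar> = a" "h (v k) = 0"
      using weak_star_acc_near_ext[OF g, of \<delta> "Suc k"] by (metis lessI)
    then show ?thesis using \<open>\<delta> \<le> \<epsilon>\<close> by auto
  qed
  then show "\<bar>g u0\<bar> \<le> a" "g (v k) = 0"
    using field_le_epsilon[of "\<bar>g u0\<bar>" a] field_le_epsilon[of "\<bar>g (v k)\<bar>" 0] by auto
qed

lemma weak_star_acc_subset_dual_ball: "weak_star_acc X (dual_ext X) \<subseteq> dual_ball X a"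
proof
  fix g assume g: "g \<in> weak_star_acc X (dual_ext X)"
  then have gd: "g \<in> dual_space X" unfolding weak_star_acc_def by simp
  have g_eq: "g = psi (g u0) 0 0"
    using dual_space_eq_psi[OF gd, of 0] weak_star_acc_values(2)[OF g] by simp
  have "\<bar>g y\<bar> \<le> a * norm y" if "y \<in> X" for y
  proof -
    have "\<bar>g y\<bar> = \<bar>g u0\<bar> * \<bar>y 0\<bar>"
      using fun_cong[OF g_eq, of y] that by (simp add: psi_def abs_mult)
    also have "\<dots> \<le> a * norm y"
      using weak_star_acc_values(1)[OF g] abs_apply_bcontfun_le_norm[of y 0] by (simp add: mult_mono)
    finally show ?thesis .
  qed
  then show "g \<in> dual_ball X a" by (rule dual_ballI[OF gd])
qed

lemma II_polyhedral_X: "II_polyhedral X"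
  unfolding II_polyhedral_def using a_pos a_less_1 weak_star_acc_subset_dual_ball by blast

lemma u0_in_unit_ball: "u0 \<in> unit_ball_of X"
  unfolding unit_ball_of_def using u0_in_X norm_u0 by simp

lemma Sup_psi_unit_ball: "Sup (psi 1 0 0 ` unit_ball_of X) = 1"
proof (rule cSup_eq_maximum)
  show "1 \<in> psi 1 0 0 ` unit_ball_of X"
    using u0_in_unit_ball psi_u0 by (metis image_eqI)
  fix z assume "z \<in> psi 1 0 0 ` unit_ball_of X"
  then obtain y where y: "y \<in> X" "norm y \<le> 1" "z = psi 1 0 0 y"
    unfolding unit_ball_of_def by auto
  have "in_hexagon a 1 0" unfolding in_hexagon_def by simp
  then have "\<bar>psi 1 0 0 y\<bar> \<le> 1 * norm y"
    using dual_ballD(2)[OF psi_in_dual_ball y(1)] by blast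
  then show "z \<le> 1" using y(2,3) abs_ge_self[of z] by simp
qed

lemma slice_psi_unit_ball:
  assumes "y \<in> slice (unit_ball_of X) (psi 1 0 0) \<alpha>"
  shows "y \<in> X" "1 - \<alpha> < y 0" "y 0 \<le> 1" "\<bar>zcoord y k\<bar> \<le> 1 - a * (1 - \<alpha>)"
proof -
  have y: "y \<in> X" "1 - \<alpha> < y 0" "norm y \<le> 1"
    using assms unfolding slice_def Sup_psi_unit_ball by (auto simp: unit_ball_of_def psi_def)
  then show "y \<in> X" "1 - \<alpha> < y 0" "y 0 \<le> 1"
    using abs_apply_bcontfun_le_norm[of y 0] by simp_all
  have "a * (1 - \<alpha>) \<le> a * \<bar>y 0\<bar>"
    using y a_pos by (intro mult_left_mono) auto
  then show "\<bar>zcoord y k\<bar> \<le> 1 - a * (1 - \<alpha>)"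
    using norm_X_ge[OF y(1), of k] y(3) by simp
qed

lemma diameter_slice_psi_unit_ball:
  assumes "0 \<le> \<alpha>"
  shows "diameter (slice (unit_ball_of X) (psi 1 0 0) \<alpha>) \<le> \<alpha> + 2 * (1 - a * (1 - \<alpha>))"
proof (rule diameter_le)
  have "a * (1 - \<alpha>) \<le> a * 1" using assms a_pos by (intro mult_left_mono) auto
  then have "0 \<le> 1 - a * (1 - \<alpha>)" using a_less_1 by simp
  then show "slice (unit_ball_of X) (psi 1 0 0) \<alpha> \<noteq> {} \<or> 0 \<le> \<alpha> + 2 * (1 - a * (1 - \<alpha>))"
    using assms by simp
  fix y w
  assume y: "y \<in> slice (unit_ball_of X) (psi 1 0 0) \<alpha>" and w: "w \<in> slice (unit_ball_of X) (psi 1 0 0) \<alpha>"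
  note y' = slice_psi_unit_ball[OF y] and w' = slice_psi_unit_ball[OF w]
  have "\<bar>(y - w) 0\<bar> \<le> \<alpha>" using y' w' by simp
  moreover have "a * \<bar>(y - w) 0\<bar> \<le> \<bar>(y - w) 0\<bar>"
    using a_less_1 by (simp add: mult_left_le_one_le a_pos less_imp_le)
  moreover have "\<bar>zcoord (y - w) k\<bar> \<le> 2 * (1 - a * (1 - \<alpha>))" for k
    using abs_triangle_ineq4[of "zcoord y k" "zcoord w k"] y'(4)[of k] w'(4)[of k]
    by (simp add: zcoord_diff)
  ultimately show "norm (y - w) \<le> \<alpha> + 2 * (1 - a * (1 - \<alpha>))"
    using \<open>0 \<le> 1 - a * (1 - \<alpha>)\<close>
    by (intro norm_X_le[OF subspace_diff[OF subspace_X y'(1) w'(1)]]) (auto intro: add_mono)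
qed

end

theorem theorem2p1:
  fixes \<epsilon> :: real
  assumes "\<epsilon> > 0"
  shows "\<exists>X :: (nat \<Rightarrow>\<^sub>C real) set.
           subspace X \<and> closed X \<and> \<not> (\<exists>B. finite B \<and> X \<subseteq> span B)
         \<and> II_polyhedral X
         \<and> (\<exists>f \<in> dual_space X. \<exists>\<alpha> > 0. (\<exists>x\<in>X. f x \<noteq> 0)
               \<and> diameter (slice (unit_ball_of X) f \<alpha>) < \<epsilon>)"
proof -
  define \<eta> where "\<eta> = min \<epsilon> 1 / 6"
  have \<eta>: "0 < \<eta>" "6 * \<eta> \<le> \<epsilon>" "\<eta> < 1" using assms unfolding \<eta>_def by auto
  interpret hexagonal_space "1 - \<eta>" using \<eta> by unfold_locales auto
  have "diameter (slice (unit_ball_of X) (psi 1 0 0) \<eta>) \<le> \<eta> + 2 * (1 - (1 - \<eta>) * (1 - \<eta>))"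
    using diameter_slice_psi_unit_ball \<eta>(1) by simp
  also have "\<dots> < \<epsilon>"
    using \<eta> by (simp add: algebra_simps) (use mult_nonneg_nonneg[of \<eta> "\<eta> * 2"] \<eta> in linarith)
  finally have "diameter (slice (unit_ball_of X) (psi 1 0 0) \<eta>) < \<epsilon>" .
  moreover have "\<exists>x\<in>X. psi 1 0 0 x \<noteq> 0"
    using u0_in_X psi_u0 by force
  ultimately show ?thesis
    using subspace_X closed_X X_not_finite_dimensional II_polyhedral_X psi_in_dual_space \<eta>(1)
    by (intro exI[of _ X] conjI bexI[of _ "psi 1 0 0"] exI[of _ \<eta>]) auto
qed

end
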